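(* Let $\mathcal{C}$ be a $[k+t-1,k]$ MDS code over $\mathbb{F}_q$ with generator matrix $\mathbf{G}\in\mathbb{F}_q^{k\times(k+t-1)}$, and let $\mathbf{q}\in\mathbb{F}_q^{\alpha\times\beta(k+t-1)}$ be a matrix such that for every $\mathcal{T}\subseteq[k+t-1]$ with $|\mathcal{T}|=t$, $$\mathrm{rank}(\mathbf{q}[:,\psi_\beta(\mathcal{T})])=|\mathrm{colsupp}(\mathbf{q}[:,\psi_\beta(\mathcal{T})])|.$$ Then $\mathrm{rank}\big((\mathbf{G}\otimes\mathbf{1}_\beta)\odot\mathbf{q}\big)=|\mathrm{colsupp}(\mathbf{q})|$.
   Context: $\psi_\beta(\mathcal{I})=\bigcup_{i\in\mathcal{I}}\{(i-1)\beta+1,\dots,i\beta\}$; $\mathbf{q}[:,\mathcal{J}]$ is the submatrix with columns indexed by $\mathcal{J}$; $\mathrm{colsupp}(\mathbf{W})$ is the set of indices of nonzero columns of $\mathbf{W}$. $\mathbf{1}_\beta$ is the all-one row vector of length $\beta$ and $\otimes$ the Kronecker product, so $\mathbf{G}\otimes\mathbf{1}_\beta\in\mathbb{F}_q^{k\times\beta(k+t-1)}$ repeats each column of $\mathbf{G}$ $\beta$ times. $\odot$ is the column-wise Khatri–Rao product: for $\mathbf{A}\in\mathbb{F}^{a\times N}$, $\mathbf{B}\in\mathbb{F}^{b\times N}$, $\mathbf{A}\odot\mathbf{B}\in\mathbb{F}^{ab\times N}$ has $c$-th column $\mathbf{A}[:,c]\otimes\mathbf{B}[:,c]$. *)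

theory Defs
  imports "Jordan_Normal_Form.DL_Rank_Submatrix"
begin

(* All indices are 0-based: [n] is {0..<n}. *)

definition mat_rank :: "'a::field mat \<Rightarrow> nat" where
  "mat_rank A = vec_space.rank (dim_row A) A"

definition psi :: "nat \<Rightarrow> nat set \<Rightarrow> nat set" where
  "psi \<beta> I = {c. c div \<beta> \<in> I \<and> c mod \<beta> < \<beta>}"

definition col_sub :: "'a mat \<Rightarrow> nat set \<Rightarrow> 'a mat" where
  "col_sub W J = submatrix W UNIV J"

definition colsupp :: "'a::zero mat \<Rightarrow> nat set" where
  "colsupp W = {c. c < dim_col W \<and> (\<exists>r < dim_row W. W $$ (r, c) \<noteq> 0)}"

(* G \<otimes> 1_beta : each column repeated beta times *)
definition kron_ones :: "'a mat \<Rightarrow> nat \<Rightarrow> 'a mat" where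
  "kron_ones G \<beta> = mat (dim_row G) (\<beta> * dim_col G) (\<lambda>(i, c). G $$ (i, c div \<beta>))"

definition khatri_rao :: "'a::times mat \<Rightarrow> 'a mat \<Rightarrow> 'a mat" where
  "khatri_rao A B = mat (dim_row A * dim_row B) (dim_col A)
     (\<lambda>(r, c). A $$ (r div dim_row B, c) * B $$ (r mod dim_row B, c))"

definition hweight :: "'a::zero vec \<Rightarrow> nat" where
  "hweight v = card {i. i < dim_vec v \<and> v $ i \<noteq> 0}"

definition gen_code :: "'a::comm_semiring_1 mat \<Rightarrow> 'a vec set" where
  "gen_code G = {transpose_mat G *\<^sub>v u | u. u \<in> carrier_vec (dim_row G)}"

definition min_dist :: "'a::comm_semiring_1 mat \<Rightarrow> nat" where
  "min_dist G = Min {hweight c | c. c \<in> gen_code G \<and> c \<noteq> 0\<^sub>v (dim_col G)}"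

definition is_MDS_generator :: "'a::field mat \<Rightarrow> nat \<Rightarrow> nat \<Rightarrow> bool" where
  "is_MDS_generator G n k \<longleftrightarrow> G \<in> carrier_mat k n \<and> mat_rank G = k
      \<and> min_dist G = n - k + 1"

end

theory Submission
  imports Defs
begin

text \<open>The columns of \<open>M = (G \<otimes> 1\<^sub>\<beta>) \<odot> q\<close> outside \<open>colsupp q\<close> vanish, so it suffices
  to show that the columns of \<open>M\<close> indexed by \<open>colsupp q\<close> are linearly independent. Let
  \<open>\<Sum>\<^sub>c \<kappa>\<^sub>c M[:,c] = 0\<close> and fix \<open>c\<^sub>0\<close> in block \<open>j\<^sub>0\<close>. Choose a \<open>t\<close>-set \<open>T \<ni> j\<^sub>0\<close>; as the
  code is MDS, some codeword \<open>u\<^sup>T G\<close> is nonzero exactly on \<open>T\<close>. Contracting the relation with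
  \<open>u\<close> on the \<open>G\<close>-factor gives \<open>\<Sum>\<^sub>c \<kappa>\<^sub>c (u\<^sup>T G)\<^bsub>c div \<beta>\<^esub> q[:,c] = 0\<close>, a relation among
  the nonzero columns of \<open>q[:,\<psi>\<^sub>\<beta>(T)]\<close>, which are independent by the rank hypothesis. Hence
  \<open>\<kappa>\<^sub>c\<^sub>0 (u\<^sup>T G)\<^sub>j\<^sub>0 = 0\<close>, and the second factor is nonzero.\<close>

section \<open>Independent families of columns\<close>

text \<open>Independence of the indexed family of columns; unlike \<open>lin_indpt (col A ` Z)\<close> it also
  rules out equal columns at distinct indices.\<close>
definition lin_indpt_cols_on :: "'a::field mat \<Rightarrow> nat set \<Rightarrow> bool" where
  "lin_indpt_cols_on A Z \<longleftrightarrow>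
     (\<forall>\<kappa>. (\<forall>r < dim_row A. (\<Sum>c\<in>Z. \<kappa> c * A $$ (r, c)) = 0) \<longrightarrow> (\<forall>c\<in>Z. \<kappa> c = 0))"

lemma lin_indpt_cols_onD:
  assumes "lin_indpt_cols_on A Z"
    and "\<And>r. r < dim_row A \<Longrightarrow> (\<Sum>c\<in>Z. \<kappa> c * A $$ (r, c)) = 0" and "c \<in> Z"
  shows "\<kappa> c = 0"
  using assms unfolding lin_indpt_cols_on_def by blast

lemma colsupp_subset: "colsupp A \<subseteq> {..<dim_col A}"
  unfolding colsupp_def by auto

lemma mem_colsupp_iff: "c \<in> colsupp A \<longleftrightarrow> c < dim_col A \<and> col A c \<noteq> 0\<^sub>v (dim_row A)"
  unfolding colsupp_def by (auto simp: vec_eq_iff)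

lemma inj_on_col_if_lin_indpt_cols_on:
  assumes indpt: "lin_indpt_cols_on A Z" and Z: "Z \<subseteq> {..<dim_col A}"
  shows "inj_on (col A) Z"
proof (rule inj_onI, rule ccontr)
  fix c c' assume cc: "c \<in> Z" "c' \<in> Z" "col A c = col A c'" "c \<noteq> c'"
  define \<kappa> where "\<kappa> x = (if x = c then 1 else if x = c' then -1 else (0::'a))" for x
  have "\<kappa> c = 0"
  proof (rule lin_indpt_cols_onD[where \<kappa> = \<kappa>, OF indpt _ cc(1)])
    fix r assume "r < dim_row A"
    then have "A $$ (r, c) = col A c $ r" "A $$ (r, c') = col A c' $ r"
      using Z cc(1,2) by auto
    then have same: "A $$ (r, c) = A $$ (r, c')" using cc(3) by simp
    have "(\<Sum>x\<in>Z. \<kappa> x * A $$ (r, x)) = (\<Sum>x\<in>{c, c'}. \<kappa> x * A $$ (r, x))"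
      by (rule sum.mono_neutral_right) (use Z finite_subset cc in \<open>auto simp: \<kappa>_def\<close>)
    also have "\<dots> = A $$ (r, c) - A $$ (r, c')"
      using cc(4) by (simp add: \<kappa>_def)
    finally show "(\<Sum>x\<in>Z. \<kappa> x * A $$ (r, x)) = 0"
      using same by simp
  qed
  then show False by (simp add: \<kappa>_def)
qed

context vec_space
begin

lemma lincomb_col_image_index:
  assumes A: "A \<in> carrier_mat n nc" and Z: "Z \<subseteq> {..<nc}" and inj: "inj_on (col A) Z"
    and r: "r < n"
  shows "lincomb a (col A ` Z) $ r = (\<Sum>c\<in>Z. a (col A c) * A $$ (r, c))"
proof -
  have "col A ` Z \<subseteq> carrier_vec n" using A Z by auto
  then have "lincomb a (col A ` Z) $ r = (\<Sum>v\<in>col A ` Z. a v * v $ r)"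
    using lincomb_index[OF r] by blast
  also have "\<dots> = (\<Sum>c\<in>Z. a (col A c) * col A c $ r)"
    using sum.reindex[OF inj] by simp
  also have "\<dots> = (\<Sum>c\<in>Z. a (col A c) * A $$ (r, c))"
    using A Z r by (intro sum.cong) auto
  finally show ?thesis .
qed

lemma lin_indpt_col_image_if_lin_indpt_cols_on:
  assumes A: "A \<in> carrier_mat n nc" and Z: "Z \<subseteq> {..<nc}"
    and indpt: "lin_indpt_cols_on A Z"
  shows "lin_indpt (col A ` Z)"
proof
  have fin: "finite Z" using Z finite_subset by blast
  have sub: "col A ` Z \<subseteq> carrier_vec n" using A Z by auto
  have inj: "inj_on (col A) Z" using inj_on_col_if_lin_indpt_cols_on[OF indpt] Z A by simp
  assume dep: "lin_dep (col A ` Z)"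
  obtain a v where a: "a \<in> col A ` Z \<rightarrow> UNIV" "lincomb a (col A ` Z) = 0\<^sub>v n"
    "v \<in> col A ` Z" "a v \<noteq> 0"
    using finite_lin_dep[OF _ dep sub] fin by auto
  have "a (col A c) = 0" if "c \<in> Z" for c
  proof (rule lin_indpt_cols_onD[where \<kappa> = "\<lambda>c. a (col A c)", OF indpt _ that])
    fix r assume "r < dim_row A"
    then have r: "r < n" using A by simp
    show "(\<Sum>c\<in>Z. a (col A c) * A $$ (r, c)) = 0"
      using lincomb_col_image_index[OF A Z inj r, of a] a(2) r by simp
  qed
  then show False using a(3,4) by blast
qed

lemma lin_indpt_cols_onI:
  assumes A: "A \<in> carrier_mat n nc" and Z: "Z \<subseteq> {..<nc}"
    and indpt: "lin_indpt (col A ` Z)" and inj: "inj_on (col A) Z"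
  shows "lin_indpt_cols_on A Z"
  unfolding lin_indpt_cols_on_def
proof (intro allI impI ballI)
  fix \<kappa> c assume sum0: "\<forall>r < dim_row A. (\<Sum>c\<in>Z. \<kappa> c * A $$ (r, c)) = 0" and c: "c \<in> Z"
  have fin: "finite Z" using Z finite_subset by blast
  have sub: "col A ` Z \<subseteq> carrier_vec n" using A Z by auto
  define a where "a = \<kappa> \<circ> inv_into Z (col A)"
  have a_col: "a (col A x) = \<kappa> x" if "x \<in> Z" for x
    using inj that by (simp add: a_def)
  have "lincomb a (col A ` Z) = 0\<^sub>v n"
  proof (rule eq_vecI)
    fix r assume "r < dim_vec (0\<^sub>v n)"
    then have r: "r < n" by simp
    have "lincomb a (col A ` Z) $ r = (\<Sum>c\<in>Z. \<kappa> c * A $$ (r, c))"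
      using lincomb_col_image_index[OF A Z inj r, of a] a_col by simp
    then show "lincomb a (col A ` Z) $ r = 0\<^sub>v n $ r"
      using sum0 A r by simp
  qed (use lincomb_dim[OF finite_imageI[OF fin] sub] in simp)
  then have "a \<in> col A ` Z \<rightarrow> {0}"
    using not_lindepD[OF _ _ subset_refl] indpt fin by auto
  then have "a (col A c) = 0" using c by blast
  then show "\<kappa> c = 0" using a_col c by simp
qed

lemma zero_notin_lin_indpt_cols:
  assumes "A \<in> carrier_mat n nc" "S \<subseteq> set (cols A)" "lin_indpt S"
  shows "0\<^sub>v n \<notin> S"
proof -
  have "S \<subseteq> carrier_vec n" using assms(1,2) cols_dim by blast
  then show ?thesis using zero_nin_lin_indpt assms(3) class_semiring.one_zeroI by auto
qed

lemma nonzero_cols_subset: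
  assumes A: "A \<in> carrier_mat n nc"
  shows "set (cols A) - {0\<^sub>v n} \<subseteq> col A ` colsupp A"
proof
  fix x assume "x \<in> set (cols A) - {0\<^sub>v n}"
  then obtain c where c: "c < nc" "x = col A c" "x \<noteq> 0\<^sub>v n"
    using A by (auto simp: cols_def)
  then have "c \<in> colsupp A" using A by (simp add: mem_colsupp_iff)
  then show "x \<in> col A ` colsupp A" using c by blast
qed

lemma maximal_lin_indpt_exists:
  obtains S where "maximal S (\<lambda>T. T \<subseteq> set (cols A) \<and> lin_indpt T)"
  using maximal_exists[of "\<lambda>T. T \<subseteq> set (cols A) \<and> lin_indpt T" "card (set (cols A))" "{}"]
  by (meson List.finite_set card_mono empty_iff empty_subsetI finite_lin_indpt2 rev_finite_subset)

lemma rank_eq_card_if_lin_indpt_cols_on: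
  assumes A: "A \<in> carrier_mat n nc" and Z: "Z \<subseteq> {..<nc}" and supp: "colsupp A \<subseteq> Z"
    and indpt: "lin_indpt_cols_on A Z"
  shows "rank A = card Z"
proof -
  have li: "lin_indpt (col A ` Z)"
    using lin_indpt_col_image_if_lin_indpt_cols_on[OF A Z indpt] .
  have inj: "inj_on (col A) Z" using inj_on_col_if_lin_indpt_cols_on[OF indpt] Z A by simp
  have "maximal (col A ` Z) (\<lambda>T. T \<subseteq> set (cols A) \<and> lin_indpt T)"
    unfolding maximal_def
  proof (intro conjI allI impI)
    show "col A ` Z \<subseteq> set (cols A)" using A Z by (auto simp: cols_def)
    fix B assume B: "col A ` Z \<subseteq> B \<and> B \<subseteq> set (cols A) \<and> lin_indpt B"
    then have no_zero: "0\<^sub>v n \<notin> B" using zero_notin_lin_indpt_cols[OF A] by blast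
    then have "B \<subseteq> col A ` Z" using B nonzero_cols_subset[OF A] supp by blast
    then show "B = col A ` Z" using B by blast
  qed (use li in simp)
  then show ?thesis using rank_card_indpt[OF A] card_image[OF inj] by simp
qed

lemma lin_indpt_cols_on_colsupp_if_rank_eq:
  assumes A: "A \<in> carrier_mat n nc" and rank: "rank A = card (colsupp A)"
  shows "lin_indpt_cols_on A (colsupp A)"
proof -
  obtain S where S: "maximal S (\<lambda>T. T \<subseteq> set (cols A) \<and> lin_indpt T)"
    by (rule maximal_lin_indpt_exists)
  then have li: "lin_indpt S" and S_cols: "S \<subseteq> set (cols A)" unfolding maximal_def by auto
  have "0\<^sub>v n \<notin> S" using zero_notin_lin_indpt_cols[OF A S_cols li] .
  then have S_sub: "S \<subseteq> col A ` colsupp A" using S_cols nonzero_cols_subset[OF A] by blast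
  have Z: "colsupp A \<subseteq> {..<nc}" using colsupp_subset A by auto
  have fin: "finite (colsupp A)" using Z finite_subset by blast
  have "card (colsupp A) = card S" using rank rank_card_indpt[OF A S] by simp
  also have "\<dots> \<le> card (col A ` colsupp A)" using card_mono[OF _ S_sub] fin by blast
  finally have card_eq: "card (col A ` colsupp A) = card (colsupp A)"
    using card_image_le[OF fin, of "col A"] by linarith
  then have "S = col A ` colsupp A"
    using card_subset_eq[OF _ S_sub] fin rank rank_card_indpt[OF A S] by simp
  then show ?thesis
    using lin_indpt_cols_onI[OF A Z] li eq_card_imp_inj_on[OF fin card_eq] by simp
qed

lemma exists_nonzero_kernel_vec:
  fixes B :: "'a mat"
  assumes B: "B \<in> carrier_mat n m" and nm: "n < m"
  obtains v where "v \<in> carrier_vec m" "v \<noteq> 0\<^sub>v m" "B *\<^sub>v v = 0\<^sub>v n"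
proof (cases "distinct (cols B)")
  case True
  have sub: "set (cols B) \<subseteq> carrier_vec n" using B cols_dim by blast
  have "lin_dep (set (cols B))"
  proof (rule ccontr)
    assume "lin_indpt (set (cols B))"
    then have "card (set (cols B)) \<le> n" using li_le_dim(2)[OF fin_dim sub] dim_is_n by simp
    moreover have "card (set (cols B)) = m" using distinct_card[OF True] B by simp
    ultimately show False using nm by simp
  qed
  then show ?thesis using lin_depE[OF B _ True] that by blast
next
  case False
  then obtain i j where ij: "i < m" "j < m" "i \<noteq> j" "col B i = col B j"
    using B unfolding distinct_conv_nth by auto
  define v where "v = vec m (\<lambda>x. if x = i then 1 else if x = j then -1 else (0::'a))"
  have "B *\<^sub>v v = 0\<^sub>v n"
  proof (rule eq_vecI)
    fix r assume "r < dim_vec (0\<^sub>v n)"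
    then have r: "r < n" by simp
    have "col B i $ r = B $$ (r, i)" "col B j $ r = B $$ (r, j)"
      using ij(1,2) r B by auto
    then have same: "B $$ (r, i) = B $$ (r, j)" using ij(4) by simp
    have "(B *\<^sub>v v) $ r = (\<Sum>x\<in>{0..<m}. B $$ (r, x) * v $ x)"
      using r B by (simp add: scalar_prod_def v_def)
    also have "\<dots> = (\<Sum>x\<in>{i, j}. B $$ (r, x) * v $ x)"
      by (rule sum.mono_neutral_right) (use ij in \<open>simp_all add: v_def\<close>)
    also have "\<dots> = 0" using ij same by (simp add: v_def)
    finally show "(B *\<^sub>v v) $ r = 0\<^sub>v n $ r" using r by simp
  qed (use B in simp)
  moreover have "v $ i = 1" using ij by (simp add: v_def)
  then have "v \<noteq> 0\<^sub>v m" using ij by auto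
  moreover have "v \<in> carrier_vec m" by (simp add: v_def)
  ultimately show ?thesis using that by blast
qed

lemma transpose_mult_vec_eq_0_imp_eq_0:
  assumes A: "A \<in> carrier_mat n m" and rank: "rank A = n" and u: "u \<in> carrier_vec n"
    and zero: "transpose_mat A *\<^sub>v u = 0\<^sub>v m"
  shows "u = 0\<^sub>v n"
proof -
  obtain S where S: "maximal S (\<lambda>T. T \<subseteq> set (cols A) \<and> lin_indpt T)"
    by (rule maximal_lin_indpt_exists)
  then have li: "lin_indpt S" and S_cols: "S \<subseteq> set (cols A)" unfolding maximal_def by auto
  have S_carr: "S \<subseteq> carrier_vec n" using S_cols A cols_dim by blast
  have "basis S"
    using dim_li_is_basis[OF fin_dim _ S_carr li] rank rank_card_indpt[OF A S] dim_is_n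
      finite_subset[OF S_cols] by simp
  then have span: "span S = carrier_vec n" unfolding basis_def by simp
  have "u \<in> orthogonal_complement S"
    unfolding orthogonal_complement_def
  proof (intro CollectI conjI ballI)
    fix y assume "y \<in> S"
    then obtain c where c: "c < m" "y = col A c"
      using S_cols A by (auto simp: cols_def)
    have "(transpose_mat A *\<^sub>v u) $ c = 0" using zero c by simp
    then show "u \<bullet> y = 0"
      using c A u comm_scalar_prod[OF u, of y] by auto
  qed (use u in simp)
  then have orth: "u \<in> orthogonal_complement (span S)" using S_carr by simp
  show ?thesis
  proof (rule eq_vecI)
    fix i assume "i < dim_vec (0\<^sub>v n)"
    then have i: "i < n" by simp
    then have "u \<bullet> unit_vec n i = 0"
      using orth span unit_vec_carrier unfolding orthogonal_complement_def by blast
    then show "u $ i = 0\<^sub>v n $ i" using i u by simp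
  qed (use u in simp)
qed

end

section \<open>Column submatrices\<close>

lemma bij_betw_pick:
  "bij_betw (pick J) {..<card {a. a < N \<and> a \<in> J}} {a. a < N \<and> a \<in> J}"
proof -
  define JN where "JN = {a. a < N \<and> a \<in> J}"
  have fin: "finite JN" unfolding JN_def by simp
  have inj: "inj_on (pick JN) {..<card JN}"
    by (rule strict_mono_on_imp_inj_on) (auto simp: strict_mono_on_def pick_mono)
  have sub: "pick JN ` {..<card JN} \<subseteq> JN" using pick_in_set by auto
  moreover have "card (pick JN ` {..<card JN}) = card JN" using card_image[OF inj] by simp
  ultimately have "bij_betw (pick JN) {..<card JN} JN"
    unfolding bij_betw_def using inj card_subset_eq[OF fin sub] by simp
  moreover have "pick J i = pick JN i" if "i \<in> {..<card JN}" for i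
    using pick_reduce_set that unfolding JN_def by auto
  ultimately show ?thesis using bij_betw_cong unfolding JN_def by blast
qed

lemma dim_col_sub:
  "dim_row (col_sub A J) = dim_row A" "dim_col (col_sub A J) = card {j. j < dim_col A \<and> j \<in> J}"
  unfolding col_sub_def by (simp_all add: dim_submatrix)

lemma col_col_sub:
  assumes i: "i < dim_col (col_sub A J)"
  shows "col (col_sub A J) i = col A (pick J i)"
proof (rule eq_vecI)
  have i': "i < card {j. j < dim_col A \<and> j \<in> J}" using i by (simp only: dim_col_sub)
  fix r assume "r < dim_vec (col A (pick J i))"
  then have r: "r < dim_row A" by simp
  have "col (col_sub A J) i $ r = submatrix A UNIV J $$ (r, i)"
    using i r by (simp add: dim_submatrix col_sub_def)
  also have "\<dots> = A $$ (pick UNIV r, pick J i)" by (rule submatrix_index) (use r i' in simp_all)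
  finally show "col (col_sub A J) i $ r = col A (pick J i) $ r"
    using r pick_le[OF i'] by (simp add: pick_UNIV)
qed (simp add: dim_col_sub)

lemma bij_betw_pick_colsupp_col_sub:
  "bij_betw (pick J) (colsupp (col_sub A J)) (colsupp A \<inter> J)"
proof -
  let ?m = "card {j. j < dim_col A \<and> j \<in> J}"
  note bij = bij_betw_pick[of J "dim_col A"]
  have supp_iff: "i \<in> colsupp (col_sub A J) \<longleftrightarrow> pick J i \<in> colsupp A" if i: "i < ?m" for i
  proof -
    have "pick J i < dim_col A" using bij i by (auto simp: bij_betw_def)
    moreover have "i < dim_col (col_sub A J)" using i by (simp only: dim_col_sub)
    moreover have "col (col_sub A J) i = col A (pick J i)" using col_col_sub calculation(2) .
    ultimately show ?thesis by (simp add: mem_colsupp_iff dim_col_sub(1))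
  qed
  have "colsupp (col_sub A J) \<subseteq> {..<?m}" using colsupp_subset dim_col_sub by metis
  moreover have "pick J ` colsupp (col_sub A J) = colsupp A \<inter> J"
  proof
    show "pick J ` colsupp (col_sub A J) \<subseteq> colsupp A \<inter> J"
      using bij supp_iff \<open>colsupp (col_sub A J) \<subseteq> {..<?m}\<close> by (auto simp: bij_betw_def)
    show "colsupp A \<inter> J \<subseteq> pick J ` colsupp (col_sub A J)"
    proof
      fix c assume c: "c \<in> colsupp A \<inter> J"
      then have "c \<in> {a. a < dim_col A \<and> a \<in> J}" using colsupp_subset by auto
      then obtain i where "i < ?m" "c = pick J i" using bij by (auto simp: bij_betw_def)
      then show "c \<in> pick J ` colsupp (col_sub A J)" using supp_iff c by blast
    qed
  qed
  ultimately show ?thesis using bij_betw_subset[OF bij] by blast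
qed

lemma lin_indpt_cols_on_col_sub:
  assumes "lin_indpt_cols_on (col_sub A J) (colsupp (col_sub A J))"
  shows "lin_indpt_cols_on A (colsupp A \<inter> J)"
  unfolding lin_indpt_cols_on_def
proof (intro allI impI ballI)
  fix \<kappa> c assume sum0: "\<forall>r < dim_row A. (\<Sum>c\<in>colsupp A \<inter> J. \<kappa> c * A $$ (r, c)) = 0"
    and c: "c \<in> colsupp A \<inter> J"
  note bij = bij_betw_pick_colsupp_col_sub[of J A]
  obtain i where i: "i \<in> colsupp (col_sub A J)" "c = pick J i"
    using bij c by (auto simp: bij_betw_def)
  have "\<kappa> (pick J i) = 0"
  proof (rule lin_indpt_cols_onD[where \<kappa> = "\<kappa> \<circ> pick J", OF assms _ i(1), simplified])
    fix r assume "r < dim_row (col_sub A J)"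
    then have r: "r < dim_row A" by (simp add: dim_col_sub)
    have "(\<Sum>i\<in>colsupp (col_sub A J). \<kappa> (pick J i) * col_sub A J $$ (r, i))
        = (\<Sum>i\<in>colsupp (col_sub A J). \<kappa> (pick J i) * A $$ (r, pick J i))"
    proof (rule sum.cong[OF refl])
      fix i assume "i \<in> colsupp (col_sub A J)"
      then have i: "i < dim_col (col_sub A J)" using colsupp_subset by blast
      then have "col (col_sub A J) i $ r = col A (pick J i) $ r" using col_col_sub by metis
      moreover have "pick J i < dim_col A"
        using bij_betw_pick[of J "dim_col A"] i by (auto simp: bij_betw_def dim_col_sub)
      ultimately show "\<kappa> (pick J i) * col_sub A J $$ (r, i) = \<kappa> (pick J i) * A $$ (r, pick J i)"
        using r i by (simp add: dim_col_sub)
    qed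
    also have "\<dots> = (\<Sum>c\<in>colsupp A \<inter> J. \<kappa> c * A $$ (r, c))"
      using sum.reindex_bij_betw[OF bij, of "\<lambda>c. \<kappa> c * A $$ (r, c)"] .
    finally show "(\<Sum>i\<in>colsupp (col_sub A J). \<kappa> (pick J i) * col_sub A J $$ (r, i)) = 0"
      using sum0 r by simp
  qed
  then show "\<kappa> c = 0" using i by simp
qed

lemma lin_indpt_cols_on_colsupp_inter_if_rank_eq:
  assumes A: "A \<in> carrier_mat n m"
    and rank: "mat_rank (col_sub A J) = card (colsupp (col_sub A J))"
  shows "lin_indpt_cols_on A (colsupp A \<inter> J)"
proof (rule lin_indpt_cols_on_col_sub, rule vec_space.lin_indpt_cols_on_colsupp_if_rank_eq)
  show "col_sub A J \<in> carrier_mat n (dim_col (col_sub A J))"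
    by (rule carrier_matI) (use A in \<open>simp_all add: dim_col_sub\<close>)
  show "vec_space.rank n (col_sub A J) = card (colsupp (col_sub A J))"
    using rank A unfolding mat_rank_def by (simp add: dim_col_sub)
qed

section \<open>Khatri--Rao products\<close>

lemma khatri_rao_carrier:
  "A \<in> carrier_mat k N \<Longrightarrow> B \<in> carrier_mat \<alpha> N \<Longrightarrow> khatri_rao A B \<in> carrier_mat (k * \<alpha>) N"
  unfolding khatri_rao_def by simp

lemma mult_add_less_mult:
  fixes i k s m :: nat
  assumes "i < k" "s < m"
  shows "i * m + s < k * m"
proof -
  have "i * m + s < (i + 1) * m" using assms(2) by simp
  also have "\<dots> \<le> k * m" using assms(1) by (intro mult_le_mono1) simp
  finally show ?thesis .
qed

lemma index_khatri_rao:
  assumes "i < dim_row A" "s < dim_row B" "c < dim_col A"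
  shows "khatri_rao A B $$ (i * dim_row B + s, c) = A $$ (i, c) * B $$ (s, c)"
  using assms mult_add_less_mult[OF assms(1,2)] unfolding khatri_rao_def by simp

lemma colsupp_khatri_rao_subset:
  fixes A B :: "'a::mult_zero mat"
  assumes "dim_col A = dim_col B"
  shows "colsupp (khatri_rao A B) \<subseteq> colsupp B"
proof
  fix c assume "c \<in> colsupp (khatri_rao A B)"
  then obtain r where r: "r < dim_row A * dim_row B" "c < dim_col A"
    and nz: "A $$ (r div dim_row B, c) * B $$ (r mod dim_row B, c) \<noteq> 0"
    unfolding colsupp_def khatri_rao_def by auto
  have "r mod dim_row B < dim_row B" using r(1) by (cases "dim_row B") auto
  moreover have "B $$ (r mod dim_row B, c) \<noteq> 0" using nz by auto
  ultimately show "c \<in> colsupp B" using r(2) assms unfolding colsupp_def by auto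
qed

lemma sum_transpose_mult_vec_khatri_rao:
  fixes A B :: "'a::comm_semiring_0 mat"
  assumes A: "A \<in> carrier_mat k N" and B: "B \<in> carrier_mat \<alpha> N" and Z: "Z \<subseteq> {..<N}"
    and u: "u \<in> carrier_vec k" and s: "s < \<alpha>"
  shows "(\<Sum>c\<in>Z. \<kappa> c * (transpose_mat A *\<^sub>v u) $ c * B $$ (s, c))
    = (\<Sum>i<k. u $ i * (\<Sum>c\<in>Z. \<kappa> c * khatri_rao A B $$ (i * \<alpha> + s, c)))"
proof -
  have "\<kappa> c * (transpose_mat A *\<^sub>v u) $ c * B $$ (s, c)
      = (\<Sum>i<k. u $ i * (\<kappa> c * khatri_rao A B $$ (i * \<alpha> + s, c)))" if c: "c \<in> Z" for c
  proof -
    have "(\<Sum>i<k. u $ i * (\<kappa> c * khatri_rao A B $$ (i * \<alpha> + s, c)))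
        = (\<Sum>i<k. u $ i * (\<kappa> c * (A $$ (i, c) * B $$ (s, c))))"
      using index_khatri_rao[of _ A s B c] s c A B Z by (intro sum.cong) auto
    moreover have "c < N" using c Z by auto
    then have "(transpose_mat A *\<^sub>v u) $ c = (\<Sum>i<k. A $$ (i, c) * u $ i)"
      using A u by (simp add: scalar_prod_def lessThan_atLeast0)
    ultimately show ?thesis
      by (simp add: sum_distrib_left sum_distrib_right, intro sum.cong) (simp_all add: ac_simps)
  qed
  then have "(\<Sum>c\<in>Z. \<kappa> c * (transpose_mat A *\<^sub>v u) $ c * B $$ (s, c))
      = (\<Sum>c\<in>Z. \<Sum>i<k. u $ i * (\<kappa> c * khatri_rao A B $$ (i * \<alpha> + s, c)))"
    by (rule sum.cong[OF refl])
  also have "\<dots> = (\<Sum>i<k. u $ i * (\<Sum>c\<in>Z. \<kappa> c * khatri_rao A B $$ (i * \<alpha> + s, c)))"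
    by (subst sum.swap) (simp add: sum_distrib_left)
  finally show ?thesis .
qed

text \<open>Contracting a vanishing combination of columns with \<open>u\<close> on the \<open>A\<close>-factor scales the
  coefficient of column \<open>c\<close> by \<open>(A\<^sup>T u)\<^sub>c\<close>; the hypothesis lets \<open>u\<close> kill all columns outside a
  set \<open>J\<close> on which \<open>B\<close> is independent, while keeping \<open>c\<^sub>0\<close>.\<close>
lemma lin_indpt_cols_on_khatri_rao:
  assumes A: "A \<in> carrier_mat k N" and B: "B \<in> carrier_mat \<alpha> N" and Z: "Z \<subseteq> {..<N}"
    and separating: "\<And>c\<^sub>0. c\<^sub>0 \<in> Z \<Longrightarrow> \<exists>u \<in> carrier_vec k. \<exists>J.
       (transpose_mat A *\<^sub>v u) $ c\<^sub>0 \<noteq> 0 \<and> (\<forall>c \<in> Z - J. (transpose_mat A *\<^sub>v u) $ c = 0)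
       \<and> lin_indpt_cols_on B (Z \<inter> J)"
  shows "lin_indpt_cols_on (khatri_rao A B) Z"
  unfolding lin_indpt_cols_on_def
proof (intro allI impI ballI)
  fix \<kappa> c\<^sub>0
  assume sum0: "\<forall>r < dim_row (khatri_rao A B). (\<Sum>c\<in>Z. \<kappa> c * khatri_rao A B $$ (r, c)) = 0"
    and c\<^sub>0: "c\<^sub>0 \<in> Z"
  obtain u J where u: "u \<in> carrier_vec k" and w: "(transpose_mat A *\<^sub>v u) $ c\<^sub>0 \<noteq> 0"
    and w_zero: "\<forall>c \<in> Z - J. (transpose_mat A *\<^sub>v u) $ c = 0"
    and indpt: "lin_indpt_cols_on B (Z \<inter> J)"
    using separating[OF c\<^sub>0] by blast
  define w where "w c = (transpose_mat A *\<^sub>v u) $ c" for c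
  have "\<kappa> c\<^sub>0 * w c\<^sub>0 = 0"
  proof (rule lin_indpt_cols_onD[where \<kappa> = "\<lambda>c. \<kappa> c * w c", OF indpt])
    fix s assume "s < dim_row B"
    then have s: "s < \<alpha>" using B by simp
    have "(\<Sum>c\<in>Z \<inter> J. \<kappa> c * w c * B $$ (s, c)) = (\<Sum>c\<in>Z. \<kappa> c * w c * B $$ (s, c))"
      by (rule sum.mono_neutral_left) (use Z finite_subset w_zero in \<open>auto simp: w_def\<close>)
    also have "\<dots> = (\<Sum>i<k. u $ i * (\<Sum>c\<in>Z. \<kappa> c * khatri_rao A B $$ (i * \<alpha> + s, c)))"
      unfolding w_def by (rule sum_transpose_mult_vec_khatri_rao[OF A B Z u s])
    also have "\<dots> = 0"
    proof -
      have "i * \<alpha> + s < dim_row (khatri_rao A B)" if "i < k" for i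
        using mult_add_less_mult[OF that s] khatri_rao_carrier[OF A B] by simp
      then show ?thesis using sum0 by simp
    qed
    finally show "(\<Sum>c\<in>Z \<inter> J. \<kappa> c * w c * B $$ (s, c)) = 0" .
  qed (use c\<^sub>0 w w_zero in \<open>auto simp: w_def\<close>)
  then show "\<kappa> c\<^sub>0 = 0" using w by (simp add: w_def)
qed

lemma kron_ones_carrier: "G \<in> carrier_mat k n \<Longrightarrow> kron_ones G \<beta> \<in> carrier_mat k (\<beta> * n)"
  unfolding kron_ones_def by simp

lemma transpose_kron_ones_mult_vec:
  assumes G: "G \<in> carrier_mat k n" and c: "c < \<beta> * n"
  shows "(transpose_mat (kron_ones G \<beta>) *\<^sub>v u) $ c = (transpose_mat G *\<^sub>v u) $ (c div \<beta>)"
proof -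
  have cn: "c div \<beta> < n" using c by (simp add: less_mult_imp_div_less mult.commute)
  moreover have "col (kron_ones G \<beta>) c = col G (c div \<beta>)"
    by (rule eq_vecI) (use G c cn in \<open>auto simp: kron_ones_def\<close>)
  ultimately show ?thesis using G c by (simp add: kron_ones_def)
qed

section \<open>MDS codes\<close>

lemma hweight_le_dim_vec: "hweight v \<le> dim_vec v"
  unfolding hweight_def by (rule order_trans[OF card_mono[of "{..<dim_vec v}"]]) auto

lemma min_dist_le_hweight:
  assumes c: "c \<in> gen_code G" "c \<noteq> 0\<^sub>v (dim_col G)"
  shows "min_dist G \<le> hweight c"
proof -
  have "hweight c \<le> dim_col G" if "c \<in> gen_code G" for c
    using that hweight_le_dim_vec[of c] unfolding gen_code_def by auto
  then have "{hweight c | c. c \<in> gen_code G \<and> c \<noteq> 0\<^sub>v (dim_col G)} \<subseteq> {..dim_col G}"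
    by auto
  then have "finite {hweight c | c. c \<in> gen_code G \<and> c \<noteq> 0\<^sub>v (dim_col G)}"
    using finite_subset by blast
  then show ?thesis unfolding min_dist_def using c by (intro Min_le) auto
qed

lemma is_MDS_generator_le:
  assumes "is_MDS_generator G n k"
  shows "k \<le> n"
proof -
  have G: "G \<in> carrier_mat k n" and "mat_rank G = k"
    using assms unfolding is_MDS_generator_def by auto
  then show ?thesis using vec_space.rank_le_nc[OF G] unfolding mat_rank_def by simp
qed

lemma exists_vec_transpose_mult_vanishing:
  fixes G :: "'a::field mat"
  assumes G: "G \<in> carrier_mat k n" and k: "1 \<le> k"
    and R: "R \<subseteq> {0..<n}" "card R = k - 1"
  obtains u where "u \<in> carrier_vec k" "u \<noteq> 0\<^sub>v k"
    "\<And>j. j \<in> R \<Longrightarrow> (transpose_mat G *\<^sub>v u) $ j = 0"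
proof -
  have R_eq: "{j. j < n \<and> j \<in> R} = R" using R(1) by auto
  then have "dim_row (col_sub G R) = k" "dim_col (col_sub G R) = k - 1"
    using G R(2) by (simp_all add: dim_col_sub)
  then have "transpose_mat (col_sub G R) \<in> carrier_mat (k - 1) k"
    by (intro carrier_matI) simp_all
  moreover have "k - 1 < k" using k by simp
  ultimately obtain u where u: "u \<in> carrier_vec k" "u \<noteq> 0\<^sub>v k"
    and ker: "transpose_mat (col_sub G R) *\<^sub>v u = 0\<^sub>v (k - 1)"
    by (rule vec_space.exists_nonzero_kernel_vec)
  have "(transpose_mat G *\<^sub>v u) $ j = 0" if j: "j \<in> R" for j
  proof -
    have "j \<in> pick R ` {..<card R}" using bij_betw_pick[of R n] j R_eq by (simp add: bij_betw_def)
    then obtain a where a: "a < card R" "pick R a = j" by auto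
    then have "a < dim_col (col_sub G R)" using G R_eq by (simp add: dim_col_sub)
    then have "(transpose_mat (col_sub G R) *\<^sub>v u) $ a = col G j \<bullet> u"
      using col_col_sub[of a G R] a(2) by simp
    moreover have "(transpose_mat G *\<^sub>v u) $ j = col G j \<bullet> u" using j R G by auto
    ultimately show ?thesis using ker a R(2) by simp
  qed
  then show ?thesis using that u by blast
qed

text \<open>The minimum distance \<open>n - k + 1\<close> leaves a nonzero codeword that vanishes on the other
  \<open>k - 1\<close> coordinates no room for further zeros.\<close>
lemma mds_codeword_with_support:
  assumes mds: "is_MDS_generator G n k" and k: "1 \<le> k"
    and T: "T \<subseteq> {0..<n}" "card T = n - k + 1"
  obtains u where "u \<in> carrier_vec k" "\<And>j. j < n \<Longrightarrow> (transpose_mat G *\<^sub>v u) $ j \<noteq> 0 \<longleftrightarrow> j \<in> T"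
proof -
  have G: "G \<in> carrier_mat k n" and "mat_rank G = k" and md: "min_dist G = n - k + 1"
    using mds unfolding is_MDS_generator_def by auto
  then have rank: "vec_space.rank k G = k" unfolding mat_rank_def by simp
  define R where "R = {0..<n} - T"
  have "card R = k - 1"
    using card_Diff_subset[OF finite_subset[OF T(1)] T(1)] T(2) is_MDS_generator_le[OF mds]
    unfolding R_def by simp
  then obtain u where u: "u \<in> carrier_vec k" "u \<noteq> 0\<^sub>v k"
    and c_R: "\<And>j. j \<in> R \<Longrightarrow> (transpose_mat G *\<^sub>v u) $ j = 0"
    using exists_vec_transpose_mult_vanishing[OF G k, of R] unfolding R_def by blast
  define c where "c = transpose_mat G *\<^sub>v u"
  have dim_c: "dim_vec c = n" using G by (simp add: c_def)
  have "c \<noteq> 0\<^sub>v n"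
    using vec_space.transpose_mult_vec_eq_0_imp_eq_0[OF G rank u(1)] u(2) unfolding c_def by blast
  moreover have "c \<in> gen_code G" unfolding c_def gen_code_def using u G by auto
  ultimately have weight: "n - k + 1 \<le> hweight c" using min_dist_le_hweight[of c G] G md by simp
  have supp: "{j. j < dim_vec c \<and> c $ j \<noteq> 0} \<subseteq> T"
  proof
    fix j assume "j \<in> {j. j < dim_vec c \<and> c $ j \<noteq> 0}"
    then have "j < n" "c $ j \<noteq> 0" using dim_c by auto
    then show "j \<in> T" using c_R unfolding R_def c_def by auto
  qed
  moreover have "card T \<le> card {j. j < dim_vec c \<and> c $ j \<noteq> 0}"
    using weight T(2) unfolding hweight_def by simp
  ultimately have "{j. j < dim_vec c \<and> c $ j \<noteq> 0} = T"
    by (rule card_seteq[OF finite_subset[OF T(1) finite_atLeastLessThan]])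
  then have "c $ j \<noteq> 0 \<longleftrightarrow> j \<in> T" if j: "j < n" for j using j dim_c by auto
  then show ?thesis unfolding c_def by (rule that[OF u(1)])
qed

lemma exists_subset_card_mem:
  assumes "finite S" "x \<in> S" "1 \<le> m" "m \<le> card S"
  obtains T where "T \<subseteq> S" "card T = m" "x \<in> T"
proof -
  have "m - 1 \<le> card (S - {x})" using assms by simp
  then obtain T\<^sub>0 where "T\<^sub>0 \<subseteq> S - {x}" "card T\<^sub>0 = m - 1"
    by (rule obtain_subset_with_card_n)
  moreover have "finite T\<^sub>0" using calculation(1) assms(1) finite_subset by blast
  moreover have "x \<notin> T\<^sub>0" using calculation(1) by blast
  ultimately have "card (insert x T\<^sub>0) = m" using assms(3) by simp
  then show ?thesis using that[of "insert x T\<^sub>0"] \<open>T\<^sub>0 \<subseteq> S - {x}\<close> assms(2) by blast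
qed

lemma mem_psi: "0 < \<beta> \<Longrightarrow> c \<in> psi \<beta> T \<longleftrightarrow> c div \<beta> \<in> T"
  unfolding psi_def by simp

lemma lin_indpt_cols_on_khatri_rao_kron_ones:
  assumes mds: "is_MDS_generator G n k" and k: "1 \<le> k" and q: "q \<in> carrier_mat \<alpha> (\<beta> * n)"
    and indpt: "\<And>T. T \<subseteq> {0..<n} \<Longrightarrow> card T = n - k + 1 \<Longrightarrow>
      lin_indpt_cols_on q (colsupp q \<inter> psi \<beta> T)"
  shows "lin_indpt_cols_on (khatri_rao (kron_ones G \<beta>) q) (colsupp q)"
proof -
  have G: "G \<in> carrier_mat k n" using mds unfolding is_MDS_generator_def by simp
  have supp: "colsupp q \<subseteq> {..<\<beta> * n}" using colsupp_subset[of q] q by auto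
  show ?thesis
  proof (rule lin_indpt_cols_on_khatri_rao[OF kron_ones_carrier[OF G] q supp])
    fix c\<^sub>0 assume c\<^sub>0: "c\<^sub>0 \<in> colsupp q"
    then have "c\<^sub>0 < \<beta> * n" using supp by auto
    then have \<beta>: "0 < \<beta>" and block: "c\<^sub>0 div \<beta> \<in> {0..<n}"
      by (cases \<beta>, simp_all add: less_mult_imp_div_less mult.commute)
    have "1 \<le> n - k + 1" "n - k + 1 \<le> card {0..<n}"
      using is_MDS_generator_le[OF mds] k by simp_all
    then obtain T where T: "T \<subseteq> {0..<n}" "card T = n - k + 1" "c\<^sub>0 div \<beta> \<in> T"
      by (rule exists_subset_card_mem[OF finite_atLeastLessThan block])
    obtain u where u: "u \<in> carrier_vec k"
      and supp_u: "\<And>j. j < n \<Longrightarrow> (transpose_mat G *\<^sub>v u) $ j \<noteq> 0 \<longleftrightarrow> j \<in> T"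
      using mds_codeword_with_support[OF mds k T(1,2)] by blast
    have w: "(transpose_mat (kron_ones G \<beta>) *\<^sub>v u) $ c \<noteq> 0 \<longleftrightarrow> c \<in> psi \<beta> T"
      if c: "c \<in> colsupp q" for c
    proof -
      have "c < \<beta> * n" using c supp by auto
      moreover have "c div \<beta> < n" using calculation by (simp add: less_mult_imp_div_less mult.commute)
      ultimately show ?thesis
        using transpose_kron_ones_mult_vec[OF G] supp_u mem_psi[OF \<beta>] by simp
    qed
    show "\<exists>u \<in> carrier_vec k. \<exists>J. (transpose_mat (kron_ones G \<beta>) *\<^sub>v u) $ c\<^sub>0 \<noteq> 0
        \<and> (\<forall>c \<in> colsupp q - J. (transpose_mat (kron_ones G \<beta>) *\<^sub>v u) $ c = 0)
        \<and> lin_indpt_cols_on q (colsupp q \<inter> J)"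
    proof (intro bexI[OF _ u] exI conjI)
      show "(transpose_mat (kron_ones G \<beta>) *\<^sub>v u) $ c\<^sub>0 \<noteq> 0" using w[OF c\<^sub>0] T(3) mem_psi[OF \<beta>] by simp
      show "\<forall>c \<in> colsupp q - psi \<beta> T. (transpose_mat (kron_ones G \<beta>) *\<^sub>v u) $ c = 0" using w by blast
      show "lin_indpt_cols_on q (colsupp q \<inter> psi \<beta> T)" using indpt[OF T(1,2)] .
    qed
  qed
qed

theorem lemma7:
  fixes G q :: "'a::{field,finite} mat" and k t \<alpha> \<beta> :: nat
  assumes "1 \<le> k"
    and "is_MDS_generator G (k + t - 1) k"
    and "q \<in> carrier_mat \<alpha> (\<beta> * (k + t - 1))"
    and "\<And>T. T \<subseteq> {0..<k + t - 1} \<Longrightarrow> card T = t \<Longrightarrow>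
           mat_rank (col_sub q (psi \<beta> T)) = card (colsupp (col_sub q (psi \<beta> T)))"
  shows "mat_rank (khatri_rao (kron_ones G \<beta>) q) = card (colsupp q)"
proof -
  define n where "n = k + t - 1"
  have mds: "is_MDS_generator G n k" and q: "q \<in> carrier_mat \<alpha> (\<beta> * n)"
    using assms(2,3) unfolding n_def by auto
  have G: "G \<in> carrier_mat k n" using mds unfolding is_MDS_generator_def by simp
  have t: "n - k + 1 = t" using is_MDS_generator_le[OF mds] assms(1) unfolding n_def by linarith
  have "lin_indpt_cols_on q (colsupp q \<inter> psi \<beta> T)" if "T \<subseteq> {0..<n}" "card T = n - k + 1" for T
    using lin_indpt_cols_on_colsupp_inter_if_rank_eq[OF q] assms(4)[of T] that t
    unfolding n_def by simp
  then have "lin_indpt_cols_on (khatri_rao (kron_ones G \<beta>) q) (colsupp q)"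
    by (rule lin_indpt_cols_on_khatri_rao_kron_ones[OF mds assms(1) q])
  moreover have KR: "khatri_rao (kron_ones G \<beta>) q \<in> carrier_mat (k * \<alpha>) (\<beta> * n)"
    using khatri_rao_carrier[OF kron_ones_carrier[OF G] q] .
  moreover have "colsupp (khatri_rao (kron_ones G \<beta>) q) \<subseteq> colsupp q"
    by (rule colsupp_khatri_rao_subset) (use G q in \<open>simp add: kron_ones_def\<close>)
  moreover have "colsupp q \<subseteq> {..<\<beta> * n}" using colsupp_subset[of q] q by simp
  ultimately have "vec_space.rank (k * \<alpha>) (khatri_rao (kron_ones G \<beta>) q) = card (colsupp q)"
    using vec_space.rank_eq_card_if_lin_indpt_cols_on by blast
  then show ?thesis unfolding mat_rank_def using KR by simp
qed

end
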